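(* Let $S$ be the convergent sequence, i.e. a space homeomorphic to $\{0\}\cup\{1/n: n\in\mathbb{N}\}\subset\mathbb{R}$. A locally convex space $E$ is analytic if and only if $E$ is a continuous image of the space $C_{p}(S)$.
   Context: $C_p(S)$ is the space of continuous real-valued functions on $S$ with the pointwise convergence topology. A topological space is analytic if it is a continuous image of the space $\mathbb{N}^{\mathbb{N}}$ (homeomorphic to the space of irrationals). *)

theory Defs
  imports "HOL-Analysis.Analysis"
begin

definition tvs :: "'a::real_vector topology \<Rightarrow> bool" where
  "tvs T \<longleftrightarrow> topspace T = UNIV
     \<and> continuous_map (prod_topology T T) T (\<lambda>(x, y). x + y)
     \<and> continuous_map (prod_topology euclideanreal T) T (\<lambda>(c, x). c *\<^sub>R x)"

definition locally_convex_space :: "'a::real_vector topology \<Rightarrow> bool" where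
  "locally_convex_space T \<longleftrightarrow> tvs T \<and> Hausdorff_space T
     \<and> (\<forall>x U. openin T U \<and> x \<in> U \<longrightarrow> (\<exists>V. openin T V \<and> convex V \<and> x \<in> V \<and> V \<subseteq> U))"

definition baire_space :: "(nat \<Rightarrow> nat) topology" where
  "baire_space = product_topology (\<lambda>_. discrete_topology UNIV) UNIV"

definition continuous_image_of :: "'a topology \<Rightarrow> 'b topology \<Rightarrow> bool" where
  "continuous_image_of Y X \<longleftrightarrow> (\<exists>f. continuous_map X Y f \<and> f ` topspace X = topspace Y)"

definition analytic_space :: "'a topology \<Rightarrow> bool" where
  "analytic_space X \<longleftrightarrow> continuous_image_of X baire_space"

definition conv_seq :: "real set" where
  "conv_seq = insert 0 {1 / real n | n. n \<ge> 1}"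

definition Cp :: "real set \<Rightarrow> (real \<Rightarrow> real) topology" where
  "Cp A = subtopology (product_topology (\<lambda>_. euclideanreal) A)
            {f \<in> extensional A. continuous_on A f}"

end

theory Submission
  imports Defs
begin

text \<open>If \<open>E\<close> is analytic, fix a continuous surjection \<open>f\<close> of \<open>\<nat>\<^sup>\<nat>\<close> onto \<open>E\<close>.
  Viewing \<open>\<nat>\<^sup>\<nat>\<close> as the closed lattice in \<open>\<real>\<^sup>\<nat>\<close>, local convexity lets us extend \<open>f\<close>
  continuously to \<open>\<real>\<^sup>\<nat>\<close> in the manner of Dugundji. The space \<open>C\<^sub>p(S)\<close> is metrizable and
  contains a closed copy of \<open>\<nat>\<^sup>\<nat>\<close> on which the coordinates are continuous, so by Tietze
  they extend to a continuous map \<open>C\<^sub>p(S) \<rightarrow> \<real>\<^sup>\<nat>\<close> sending the copy onto the lattice;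
  composing gives a continuous surjection \<open>C\<^sub>p(S) \<rightarrow> E\<close>.

  Conversely, \<open>C\<^sub>p(S)\<close> is the space of convergent sequences with the product topology, which
  is a continuous image of \<open>\<nat>\<^sup>\<nat>\<close>: the limit and the deviations from it are coded by binary
  expansions, and a coded modulus of convergence clips the deviations.\<close>

lemma topcontinuous_at_locally_eq:
  assumes "f \<in> topspace X \<rightarrow> topspace Y" "continuous_map X Y g"
    and "openin X U" "x \<in> U" "\<And>y. y \<in> U \<Longrightarrow> f y = g y"
  shows "topcontinuous_at X Y f x"
  unfolding topcontinuous_at_def
proof (intro conjI allI impI)
  show "x \<in> topspace X" using assms(3,4) openin_subset by blast
  fix V assume V: "openin Y V \<and> f x \<in> V"
  let ?W = "U \<inter> {y \<in> topspace X. g y \<in> V}"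
  have "openin X ?W"
    using V assms(2,3) by (simp add: openin_Int openin_continuous_map_preimage)
  moreover have "x \<in> ?W" "\<forall>y\<in>?W. f y \<in> V"
    using V assms(3-5) openin_subset by auto
  ultimately show "\<exists>W. openin X W \<and> x \<in> W \<and> (\<forall>y\<in>W. f y \<in> V)" by blast
qed (fact assms(1))

lemma openin_continuous_map_less:
  "continuous_map X euclideanreal h \<Longrightarrow> openin X {x \<in> topspace X. h x < c}"
  using openin_continuous_map_preimage[of X euclideanreal h "{..<c}"] by simp

lemma openin_continuous_map_greater:
  "continuous_map X euclideanreal h \<Longrightarrow> openin X {x \<in> topspace X. c < h x}"
  using openin_continuous_map_preimage[of X euclideanreal h "{c<..}"] by simp

lemma openin_Collect_all_less:
  fixes n :: nat
  assumes "\<And>i. i < n \<Longrightarrow> openin X {x \<in> topspace X. P i x}"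
  shows "openin X {x \<in> topspace X. \<forall>i<n. P i x}"
proof -
  have "{x \<in> topspace X. \<forall>i<n. P i x} = (\<Inter>i\<in>{..<n}. {x \<in> topspace X. P i x}) \<inter> topspace X"
    by auto
  also have "openin X \<dots>"
    by (rule openin_INT) (simp_all add: assms)
  finally show ?thesis .
qed

lemma continuous_map_suminf_real:
  assumes "\<And>k. continuous_map X euclideanreal (g k)"
    and "\<And>k x. \<bar>g k x\<bar> \<le> b k" and "summable b"
  shows "continuous_map X euclideanreal (\<lambda>x. \<Sum>k. g k x)"
proof -
  have "uniform_limit (topspace X) (\<lambda>n x. \<Sum>k<n. g k x) (\<lambda>x. \<Sum>k. g k x) sequentially"
    by (rule Weierstrass_m_test_ev) (use assms(2,3) in auto)
  then have "continuous_map X Met_TC.mtopology (\<lambda>x. \<Sum>k. g k x)"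
    by (intro Met_TC.continuous_map_uniform_limit_alt[where F = sequentially])
      (auto simp: uniform_limit_iff continuous_map_sum assms(1))
  then show ?thesis by simp
qed

lemma tvs_continuous_map_add:
  assumes "tvs E" "continuous_map X E g" "continuous_map X E h"
  shows "continuous_map X E (\<lambda>x. g x + h x)"
  using continuous_map_compose[of X "prod_topology E E" "\<lambda>x. (g x, h x)" E "\<lambda>(x, y). x + y"] assms
  by (simp add: tvs_def continuous_map_paired o_def)

lemma tvs_continuous_map_scaleR:
  assumes "tvs E" "continuous_map X euclideanreal c" "continuous_map X E g"
  shows "continuous_map X E (\<lambda>x. c x *\<^sub>R g x)"
  using continuous_map_compose[of X "prod_topology euclideanreal E" "\<lambda>x. (c x, g x)" E
      "\<lambda>(c, x). c *\<^sub>R x"] assms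
  by (simp add: tvs_def continuous_map_paired o_def)

lemma tvs_continuous_map_sum_scaleR:
  fixes n :: nat
  assumes "tvs E" "\<And>m. continuous_map X euclideanreal (c m)"
  shows "continuous_map X E (\<lambda>x. \<Sum>m<n. c m x *\<^sub>R v m)"
proof (induction n)
  case 0
  then show ?case using assms(1) by (simp add: tvs_def)
next
  case (Suc n)
  have "continuous_map X E (\<lambda>x. c n x *\<^sub>R v n)"
    using assms by (intro tvs_continuous_map_scaleR) (auto simp: tvs_def)
  then show ?case using tvs_continuous_map_add[OF assms(1) Suc] by simp
qed

section \<open>Extending maps from the lattice \<open>\<nat>\<^sup>\<nat> \<subseteq> \<real>\<^sup>\<nat>\<close> into a locally convex space\<close>

definition nat_gap :: "real \<Rightarrow> real" where
  "nat_gap t = min 1 (infdist t \<nat>)"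

lemma nat_gap_nonneg: "0 \<le> nat_gap t"
  by (simp add: nat_gap_def infdist_nonneg)

lemma nat_gap_le_1: "nat_gap t \<le> 1"
  by (simp add: nat_gap_def)

lemma continuous_map_nat_gap [continuous_intros]:
  assumes "continuous_map X euclideanreal h"
  shows "continuous_map X euclideanreal (\<lambda>x. nat_gap (h x))"
proof -
  have "continuous_on UNIV (\<lambda>t::real. infdist t \<nat>)"
    by (intro continuous_on_infdist continuous_on_id)
  then have "continuous_map euclideanreal euclideanreal nat_gap"
    unfolding nat_gap_def by (auto intro!: continuous_intros)
  from continuous_map_compose[OF assms this] show ?thesis by (simp add: o_def)
qed

lemma nat_gap_eq_0_iff: "nat_gap t = 0 \<longleftrightarrow> t \<in> \<nat>"
proof -
  have "nat_gap t = 0 \<longleftrightarrow> infdist t \<nat> = 0"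
    by (simp add: nat_gap_def min_def)
  also have "\<dots> \<longleftrightarrow> t \<in> closure \<nat>"
    using in_closure_iff_infdist_zero[of "\<nat>" t] by auto
  finally show ?thesis by simp
qed

lemma nat_round_eq: "\<bar>t - real n\<bar> < 1/2 \<Longrightarrow> nat (round t) = n"
  using round_unique'[of t "int n"] by simp

lemma nat_gap_less_quarter:
  assumes "nat_gap t < 1/4"
  shows "\<bar>t - real (nat (round t))\<bar> < 1/4"
proof -
  have "infdist t \<nat> < 1/4"
    using assms by (simp add: nat_gap_def min_def split: if_splits)
  then have "(INF a\<in>\<nat>. dist t a) < 1/4"
    by (simp add: infdist_notempty)
  then obtain a where "a \<in> \<nat>" "dist t a < 1/4"
    by (subst (asm) cINF_less_iff) (auto intro: bdd_belowI2[where m = 0])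
  then obtain n where n: "\<bar>t - real n\<bar> < 1/4"
    by (auto elim!: Nats_cases simp: dist_real_def)
  then have "nat (round t) = n" by (intro nat_round_eq) auto
  with n show ?thesis by simp
qed

definition lattice_gap :: "(nat \<Rightarrow> real) \<Rightarrow> real" where
  "lattice_gap s = (\<Sum>i. nat_gap (s i) / 2^i)"

lemma summable_lattice_gap: "summable (\<lambda>i. nat_gap (s i) / 2^i)"
  by (rule summable_comparison_test[OF _ summable_geometric[of "1/2"]])
    (auto simp: power_one_over divide_right_mono nat_gap_nonneg nat_gap_le_1)

lemma lattice_gap_nonneg: "0 \<le> lattice_gap s"
  unfolding lattice_gap_def
  by (rule suminf_nonneg[OF summable_lattice_gap]) (simp add: nat_gap_nonneg)

lemma nat_gap_le_lattice_gap: "nat_gap (s i) \<le> 2^i * lattice_gap s"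
  using sum_le_suminf[OF summable_lattice_gap, of "{i}"] nat_gap_nonneg
  by (simp add: lattice_gap_def field_simps)

lemma lattice_gap_eq_0_iff: "lattice_gap s = 0 \<longleftrightarrow> (\<forall>i. s i \<in> \<nat>)"
proof
  assume "lattice_gap s = 0"
  then show "\<forall>i. s i \<in> \<nat>"
    using nat_gap_le_lattice_gap[of s] nat_gap_nonneg
    by (metis antisym mult_zero_right nat_gap_eq_0_iff)
next
  assume "\<forall>i. s i \<in> \<nat>"
  then have "nat_gap (s i) = 0" for i by (simp add: nat_gap_eq_0_iff)
  then show "lattice_gap s = 0" by (simp add: lattice_gap_def)
qed

lemma continuous_map_lattice_gap: "continuous_map (powertop_real UNIV) euclideanreal lattice_gap"
  unfolding lattice_gap_def
proof (rule continuous_map_suminf_real[where b = "\<lambda>i. (1/2)^i"])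
  show "continuous_map (powertop_real UNIV) euclideanreal (\<lambda>s. nat_gap (s i) / 2^i)" for i
    by (intro continuous_intros continuous_map_product_projection) auto
  show "\<bar>nat_gap (s i) / 2^i\<bar> \<le> (1/2)^i" for i s
    using nat_gap_nonneg nat_gap_le_1 by (simp add: power_one_over divide_right_mono)
qed simp

definition cutoff :: "nat \<Rightarrow> real \<Rightarrow> real" where
  "cutoff m t = (if m = 0 then 1 else max 0 (min 1 (2 - 2^(m+4) * t)))"

definition weight :: "nat \<Rightarrow> real \<Rightarrow> real" where
  "weight m t = cutoff m t - cutoff (Suc m) t"

definition weight_bound :: "real \<Rightarrow> nat" where
  "weight_bound t = nat \<lceil>1/t\<rceil> + 1"

lemma continuous_map_weight [continuous_intros]:
  "continuous_map X euclideanreal h \<Longrightarrow> continuous_map X euclideanreal (\<lambda>x. weight m (h x))"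
  unfolding weight_def cutoff_def by (auto intro!: continuous_intros)

lemma cutoff_antimono:
  assumes "0 \<le> t" shows "cutoff (Suc m) t \<le> cutoff m t"
proof (cases "m = 0")
  case False
  have "(2::real)^(m+4) * t \<le> 2^(Suc m+4) * t"
    using assms by (intro mult_right_mono) auto
  then show ?thesis using False by (simp add: cutoff_def)
qed (simp add: cutoff_def)

lemma weight_nonneg: "0 \<le> t \<Longrightarrow> 0 \<le> weight m t"
  using cutoff_antimono[of t m] by (simp add: weight_def)

lemma sum_weight: "(\<Sum>m<n. weight m t) = 1 - cutoff n t"
  unfolding weight_def by (subst sum_lessThan_telescope') (simp add: cutoff_def)

lemma weight_nonzero_imp_greater:
  assumes "0 \<le> t" "weight m t \<noteq> 0" shows "1/2^(m+5) < t"
proof -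
  have "cutoff (Suc m) t < cutoff m t"
    using assms cutoff_antimono[of t m] by (simp add: weight_def)
  then have "cutoff (Suc m) t < 1"
    by (auto simp: cutoff_def split: if_splits)
  then have "1 < 2^(m+5) * t"
    by (simp add: cutoff_def min_def add.commute split: if_splits)
  then show ?thesis by (simp add: field_simps)
qed

lemma weight_nonzero_imp_less:
  assumes "0 \<le> t" "0 < m" "weight m t \<noteq> 0" shows "t < 1/2^(m+3)"
proof -
  have "cutoff (Suc m) t < cutoff m t"
    using assms cutoff_antimono[of t m] by (simp add: weight_def)
  then have "0 < cutoff m t"
    by (auto simp: cutoff_def)
  then have "2^(m+4) * t < 2"
    using assms(2) by (simp add: cutoff_def)
  then show ?thesis by (simp add: field_simps power_add)
qed

lemma weight_eq_0_beyond:
  assumes "0 \<le> t" "0 < n" "1/2^(n+3) \<le> t" "n \<le> m"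
  shows "weight m t = 0"
proof (rule ccontr)
  assume "weight m t \<noteq> 0"
  then have "t < 1/2^(m+3)" using weight_nonzero_imp_less assms by auto
  also have "(1::real)/2^(m+3) \<le> 1/2^(n+3)" using assms(4) by (simp add: field_simps)
  finally show False using assms(3) by simp
qed

lemma weight_bound:
  assumes "0 < t" shows "0 < weight_bound t" "1/2^(weight_bound t + 3) \<le> t"
proof -
  have "1/t < real (weight_bound t)"
    unfolding weight_bound_def by linarith
  also have "\<dots> < 2 ^ weight_bound t"
    by (metis of_nat_less_numeral_power_cancel_iff less_exp)
  finally have "1 \<le> 2^(weight_bound t + 3) * t"
    using assms by (simp add: field_simps power_add)
  then show "1/2^(weight_bound t + 3) \<le> t"
    using assms by (simp add: field_simps)
qed (simp add: weight_bound_def)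

lemma sum_weight_eq_1:
  assumes "0 < n" "1/2^(n+3) \<le> t"
  shows "(\<Sum>m<n. weight m t) = 1"
proof -
  have "2 \<le> 2^(n+4) * t"
    using assms(2) by (simp add: field_simps power_add)
  then show ?thesis using assms(1) by (simp add: sum_weight cutoff_def)
qed

lemma nat_gap_le_if_weight_nonzero:
  assumes "weight m (lattice_gap s) \<noteq> 0" "i < m"
  shows "nat_gap (s i) \<le> 1/8"
proof -
  have "lattice_gap s < 1/2^(m+3)"
    using weight_nonzero_imp_less[OF lattice_gap_nonneg _ assms(1)] assms(2) by simp
  have "nat_gap (s i) \<le> 2^i * lattice_gap s"
    by (rule nat_gap_le_lattice_gap)
  also have "\<dots> \<le> 2^i * (1/2^(m+3))"
    using \<open>lattice_gap s < 1/2^(m+3)\<close> by (intro mult_left_mono) auto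
  also have "\<dots> \<le> 1/8"
  proof -
    have "(2::real)^(i+3) \<le> 2^(m+3)"
      by (rule power_increasing) (use assms(2) in auto)
    then show ?thesis by (simp add: field_simps power_add)
  qed
  finally show ?thesis .
qed

lemma topspace_baire_space [simp]: "topspace baire_space = UNIV"
  by (simp add: baire_space_def)

lemma baire_space_cylinder_subset:
  assumes "openin baire_space W" "a \<in> W"
  obtains K where "\<And>b. (\<forall>i<K. b i = a i) \<Longrightarrow> b \<in> W"
proof -
  obtain U where U: "finite {i. U i \<noteq> UNIV}" "a \<in> Pi\<^sub>E UNIV U" "Pi\<^sub>E UNIV U \<subseteq> W"
    using assms unfolding baire_space_def openin_product_topology_alt by fastforce
  obtain K where K: "{i. U i \<noteq> UNIV} \<subseteq> {..<K}"
    using U(1) finite_nat_bounded by blast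
  show ?thesis
  proof (rule that)
    fix b :: "nat \<Rightarrow> nat" assume b: "\<forall>i<K. b i = a i"
    have "b i \<in> U i" for i
    proof (cases "i < K")
      case False
      then have "U i = UNIV" using K by auto
      then show ?thesis by simp
    qed (use b U(2) in \<open>auto simp: PiE_def\<close>)
    then show "b \<in> W" using U(3) by (auto simp: PiE_def Pi_def)
  qed
qed

definition truncation :: "nat \<Rightarrow> (nat \<Rightarrow> real) \<Rightarrow> nat \<Rightarrow> nat" where
  "truncation m s = (\<lambda>i. if i < m then nat (round (s i)) else 0)"

text \<open>Off the lattice, a point is sent to a convex combination of the values of \<open>f\<close> at the
  truncations of its rounding; \<open>lattice_gap\<close> plays the role of the distance to the lattice, and
  a point at gap \<open>t\<close> only gives weight to truncation lengths \<open>m\<close> with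
  \<open>1/2^(m+5) < t < 1/2^(m+3)\<close>.\<close>

definition lattice_extension :: "((nat \<Rightarrow> nat) \<Rightarrow> 'a::real_vector) \<Rightarrow> (nat \<Rightarrow> real) \<Rightarrow> 'a" where
  "lattice_extension f s =
     (if lattice_gap s = 0 then f (\<lambda>i. nat (round (s i)))
      else (\<Sum>m<weight_bound (lattice_gap s). weight m (lattice_gap s) *\<^sub>R f (truncation m s)))"

lemma lattice_extension_of_nat: "lattice_extension f (\<lambda>i. real (a i)) = f a"
  by (simp add: lattice_extension_def lattice_gap_eq_0_iff)

lemma lattice_extension_eq_sum:
  assumes "0 < lattice_gap s" "\<And>m. n \<le> m \<Longrightarrow> weight m (lattice_gap s) = 0"
  shows "lattice_extension f s = (\<Sum>m<n. weight m (lattice_gap s) *\<^sub>R f (truncation m s))"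
proof -
  let ?t = "lattice_gap s"
  let ?g = "\<lambda>m. weight m ?t *\<^sub>R f (truncation m s)"
  have "weight m ?t = 0" if "weight_bound ?t \<le> m" for m
    using weight_eq_0_beyond[OF lattice_gap_nonneg] weight_bound[OF assms(1)] that by blast
  then have "sum ?g {..<weight_bound ?t} = sum ?g {..<max n (weight_bound ?t)}"
    by (intro sum.mono_neutral_left) auto
  also have "\<dots> = sum ?g {..<n}"
    using assms(2) by (intro sum.mono_neutral_right) auto
  finally show ?thesis
    using assms(1) by (simp add: lattice_extension_def)
qed

lemma lattice_extension_in_convex:
  assumes "convex V" "\<And>b. (\<forall>i<K. b i = a i) \<Longrightarrow> f b \<in> V"
    and "lattice_gap s < 1/2^(K+5)" "\<And>i. i < K \<Longrightarrow> nat (round (s i)) = a i"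
  shows "lattice_extension f s \<in> V"
proof (cases "lattice_gap s = 0")
  case True
  then show ?thesis using assms(2,4) by (simp add: lattice_extension_def)
next
  case False
  let ?t = "lattice_gap s"
  have t: "0 < ?t" using False lattice_gap_nonneg by (simp add: less_le)
  define y where "y m = (if weight m ?t = 0 then f a else f (truncation m s))" for m
  have "lattice_extension f s = (\<Sum>m<weight_bound ?t. weight m ?t *\<^sub>R y m)"
    using False by (auto simp: lattice_extension_def y_def intro: sum.cong)
  also have "\<dots> \<in> V"
  proof (rule convex_sum)
    show "(\<Sum>m<weight_bound ?t. weight m ?t) = 1"
      using weight_bound[OF t] by (rule sum_weight_eq_1)
    show "y m \<in> V" for m
    proof (cases "weight m ?t = 0")
      case False
      then have "1/2^(m+5) < ?t"
        by (rule weight_nonzero_imp_greater[OF lattice_gap_nonneg])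
      then have "(1::real)/2^(m+5) < 1/2^(K+5)"
        using assms(3) by linarith
      then have "K < m" by (simp add: field_simps)
      then show ?thesis using False assms(2,4) by (simp add: y_def truncation_def)
    qed (simp add: y_def assms(2))
  qed (simp_all add: assms(1) weight_nonneg lattice_gap_nonneg)
  finally show ?thesis .
qed

lemma topcontinuous_at_lattice_extension_on_lattice:
  assumes "locally_convex_space E" "continuous_map baire_space E f" "lattice_gap s0 = 0"
  shows "topcontinuous_at (powertop_real UNIV) E (lattice_extension f) s0"
  unfolding topcontinuous_at_def
proof (intro conjI allI impI)
  fix V assume V: "openin E V \<and> lattice_extension f s0 \<in> V"
  define a where "a = (\<lambda>i. nat (round (s0 i)))"
  have "s0 i = real (a i)" for i
    using assms(3) by (auto simp: lattice_gap_eq_0_iff a_def elim!: allE[of _ i] Nats_cases)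
  then have "s0 = (\<lambda>i. real (a i))" by blast
  then have "f a \<in> V" using V by (simp add: lattice_extension_of_nat)
  then obtain V' where V': "openin E V'" "convex V'" "f a \<in> V'" "V' \<subseteq> V"
    using assms(1) V unfolding locally_convex_space_def by blast
  have "openin baire_space {b \<in> topspace baire_space. f b \<in> V'}"
    using assms(2) V'(1) by (rule openin_continuous_map_preimage)
  then obtain K where K: "\<And>b. (\<forall>i<K. b i = a i) \<Longrightarrow> f b \<in> V'"
    by (rule baire_space_cylinder_subset) (use V'(3) in auto)
  define U where "U = {s \<in> topspace (powertop_real UNIV). lattice_gap s < 1/2^(K+5)}
      \<inter> {s \<in> topspace (powertop_real UNIV). \<forall>i<K. \<bar>s i - s0 i\<bar> < 1/4}"
  have "openin (powertop_real UNIV) U"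
    unfolding U_def
    by (intro openin_Int openin_continuous_map_less continuous_map_lattice_gap openin_Collect_all_less)
      (auto intro!: continuous_intros continuous_map_product_projection)
  moreover have "s0 \<in> U"
    using assms(3) by (simp add: U_def)
  moreover have "lattice_extension f s \<in> V" if "s \<in> U" for s
  proof -
    have "nat (round (s i)) = a i" if "i < K" for i
      using \<open>s \<in> U\<close> that \<open>\<And>i. s0 i = real (a i)\<close> by (intro nat_round_eq) (auto simp: U_def)
    then have "lattice_extension f s \<in> V'"
      using that by (intro lattice_extension_in_convex[OF V'(2) K]) (auto simp: U_def)
    then show ?thesis using V'(4) by blast
  qed
  ultimately show "\<exists>U. openin (powertop_real UNIV) U \<and> s0 \<in> U \<and> (\<forall>s\<in>U. lattice_extension f s \<in> V)"
    by blast
qed (use assms(1) in \<open>auto simp: locally_convex_space_def tvs_def\<close>)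

lemma truncation_eq_if_weight_nonzero:
  assumes "weight m (lattice_gap s) \<noteq> 0"
    and "\<And>i. i < m \<Longrightarrow> nat_gap (s i) \<le> 1/8 \<Longrightarrow> \<bar>s i - real (nat (round (s0 i)))\<bar> < 1/4"
  shows "truncation m s = truncation m s0"
proof
  fix i show "truncation m s i = truncation m s0 i"
  proof (cases "i < m")
    case True
    then have "\<bar>s i - real (nat (round (s0 i)))\<bar> < 1/4"
      using assms(2) nat_gap_le_if_weight_nonzero[OF assms(1)] by blast
    then show ?thesis by (simp add: truncation_def nat_round_eq)
  qed (simp add: truncation_def)
qed

lemma lattice_extension_locally_finite_sum:
  assumes "0 < lattice_gap s0"
  obtains U n where "openin (powertop_real UNIV) U" "s0 \<in> U"
    "\<And>s. s \<in> U \<Longrightarrow> lattice_extension f s = (\<Sum>m<n. weight m (lattice_gap s) *\<^sub>R f (truncation m s0))"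
proof -
  define t0 where "t0 = lattice_gap s0"
  define n where "n = weight_bound (t0/2)"
  have n: "0 < n" "1/2^(n+3) \<le> t0/2"
    using weight_bound[of "t0/2"] assms by (auto simp: n_def t0_def)
  \<comment> \<open>Coordinates far from \<open>\<nat>\<close> stay far from \<open>\<nat>\<close>, hence outside every weighted truncation.\<close>
  define near where "near i s \<longleftrightarrow> (if nat_gap (s0 i) < 1/4
      then \<bar>s i - real (nat (round (s0 i)))\<bar> < 1/4 else 1/8 < nat_gap (s i))" for i s
  define U where "U = {s \<in> topspace (powertop_real UNIV). t0/2 < lattice_gap s}
      \<inter> {s \<in> topspace (powertop_real UNIV). \<forall>i<n. near i s}"
  have "openin (powertop_real UNIV) {s \<in> topspace (powertop_real UNIV). near i s}" for i
    unfolding near_def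
    by (cases "nat_gap (s0 i) < 1/4"; simp only: if_True if_False;
        intro openin_continuous_map_less openin_continuous_map_greater)
      (auto intro!: continuous_intros continuous_map_product_projection)
  then have "openin (powertop_real UNIV) U"
    unfolding U_def
    by (intro openin_Int openin_continuous_map_greater continuous_map_lattice_gap openin_Collect_all_less)
  moreover have "s0 \<in> U"
    using assms nat_gap_less_quarter by (auto simp: U_def near_def t0_def)
  moreover have "lattice_extension f s = (\<Sum>m<n. weight m (lattice_gap s) *\<^sub>R f (truncation m s0))"
    if "s \<in> U" for s
  proof -
    have gap: "t0/2 < lattice_gap s" and near: "\<And>i. i < n \<Longrightarrow> near i s"
      using that by (auto simp: U_def)
    have "lattice_extension f s = (\<Sum>m<n. weight m (lattice_gap s) *\<^sub>R f (truncation m s))"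
      using gap n assms weight_eq_0_beyond[OF lattice_gap_nonneg n(1)]
      by (intro lattice_extension_eq_sum) (auto simp: t0_def)
    also have "\<dots> = (\<Sum>m<n. weight m (lattice_gap s) *\<^sub>R f (truncation m s0))"
    proof (rule sum.cong[OF refl])
      fix m assume m: "m \<in> {..<n}"
      have "truncation m s = truncation m s0" if "weight m (lattice_gap s) \<noteq> 0"
      proof (rule truncation_eq_if_weight_nonzero[OF that])
        fix i assume "i < m" "nat_gap (s i) \<le> 1/8"
        then show "\<bar>s i - real (nat (round (s0 i)))\<bar> < 1/4"
          using near[of i] m by (auto simp: near_def split: if_splits)
      qed
      then show "weight m (lattice_gap s) *\<^sub>R f (truncation m s)
          = weight m (lattice_gap s) *\<^sub>R f (truncation m s0)"
        by (cases "weight m (lattice_gap s) = 0") auto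
    qed
    finally show ?thesis .
  qed
  ultimately show ?thesis using that by blast
qed

lemma continuous_map_lattice_extension:
  assumes "locally_convex_space E" "continuous_map baire_space E f"
  shows "continuous_map (powertop_real UNIV) E (lattice_extension f)"
  unfolding continuous_map_eq_topcontinuous_at
proof
  fix s0 :: "nat \<Rightarrow> real"
  have E: "tvs E" using assms(1) by (simp add: locally_convex_space_def)
  show "topcontinuous_at (powertop_real UNIV) E (lattice_extension f) s0"
  proof (cases "lattice_gap s0 = 0")
    case False
    then have "0 < lattice_gap s0" using lattice_gap_nonneg by (simp add: less_le)
    then obtain U n where U: "openin (powertop_real UNIV) U" "s0 \<in> U"
      "\<And>s. s \<in> U \<Longrightarrow> lattice_extension f s = (\<Sum>m<n. weight m (lattice_gap s) *\<^sub>R f (truncation m s0))"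
      by (rule lattice_extension_locally_finite_sum[where f = f]) auto
    have "continuous_map (powertop_real UNIV) E
        (\<lambda>s. \<Sum>m<n. weight m (lattice_gap s) *\<^sub>R f (truncation m s0))"
      by (intro tvs_continuous_map_sum_scaleR[OF E] continuous_map_weight continuous_map_lattice_gap)
    from topcontinuous_at_locally_eq[OF _ this U(1,2)] show ?thesis
      using E U(3) by (auto simp: tvs_def)
  qed (rule topcontinuous_at_lattice_extension_on_lattice[OF assms])
qed

section \<open>The space \<open>C\<^sub>p(S)\<close>\<close>

definition conv_seq_term :: "nat \<Rightarrow> real" where
  "conv_seq_term n = 1 / (real n + 1)"

lemma conv_seq_term_pos: "0 < conv_seq_term n"
  by (simp add: conv_seq_term_def)

lemma conv_seq_term_less_iff: "conv_seq_term m < conv_seq_term n \<longleftrightarrow> n < m"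
  by (auto simp: conv_seq_term_def field_simps)

lemma nat_floor_inverse_conv_seq_term [simp]: "nat \<lfloor>1 / conv_seq_term n\<rfloor> = Suc n"
  by (simp add: conv_seq_term_def)

lemma conv_seq_eq: "conv_seq = insert 0 (range conv_seq_term)"
proof -
  have "{1 / real n |n. 1 \<le> n} = range conv_seq_term"
  proof (intro equalityI subsetI)
    fix x assume "x \<in> {1 / real n |n. 1 \<le> n}"
    then obtain n where "1 \<le> n" "x = 1 / real n" by blast
    then have "x = conv_seq_term (n - 1)" by (simp add: conv_seq_term_def of_nat_diff)
    then show "x \<in> range conv_seq_term" by blast
  next
    fix x assume "x \<in> range conv_seq_term"
    then obtain n where "x = 1 / real (Suc n)" by (auto simp: conv_seq_term_def add.commute)
    then show "x \<in> {1 / real n |n. 1 \<le> n}" by (auto intro!: exI[of _ "Suc n"])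
  qed
  then show ?thesis by (simp add: conv_seq_def)
qed

lemma conv_seq_term_tendsto_0: "conv_seq_term \<longlonglongrightarrow> 0"
  using LIMSEQ_inverse_real_of_nat
  by (simp add: conv_seq_term_def[abs_def] inverse_eq_divide add.commute)

lemma conv_seq_term_gap:
  assumes "n \<noteq> k"
  shows "conv_seq_term k - conv_seq_term (Suc k) \<le> \<bar>conv_seq_term n - conv_seq_term k\<bar>"
proof (cases "k < n")
  case True
  then have "conv_seq_term n \<le> conv_seq_term (Suc k)"
    using conv_seq_term_less_iff[of n "Suc k"] by (cases "n = Suc k") auto
  then show ?thesis by simp
next
  case False
  with assms obtain k' where k: "k = Suc k'" "n \<le> k'"
    by (cases k) auto
  have "conv_seq_term k' \<le> conv_seq_term n"
    using k conv_seq_term_less_iff[of k' n] by (cases "n = k'") auto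
  moreover have "1 / ((real k' + 2) * (real k' + 3)) \<le> 1 / ((real k' + 1) * (real k' + 2))"
    by (intro divide_left_mono mult_mono mult_pos_pos) auto
  then have "conv_seq_term k - conv_seq_term (Suc k) \<le> conv_seq_term k' - conv_seq_term k"
    unfolding k conv_seq_term_def by (simp add: field_simps)
  ultimately show ?thesis by simp
qed

lemma conv_seq_term_isolated:
  assumes "x \<in> conv_seq" "dist x (conv_seq_term k) < conv_seq_term k - conv_seq_term (Suc k)"
  shows "x = conv_seq_term k"
proof -
  consider "x = 0" | n where "x = conv_seq_term n"
    using assms(1) by (auto simp: conv_seq_eq)
  then show ?thesis
  proof cases
    case 1
    then show ?thesis
      using assms(2) conv_seq_term_pos[of "Suc k"] by (simp add: dist_real_def)
  next
    case 2
    then show ?thesis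
      using assms(2) conv_seq_term_gap[of n k] by (cases "n = k") (auto simp: dist_real_def)
  qed
qed

lemma continuous_on_conv_seq_iff:
  fixes g :: "real \<Rightarrow> 'a::metric_space"
  shows "continuous_on conv_seq g \<longleftrightarrow> (\<lambda>n. g (conv_seq_term n)) \<longlonglongrightarrow> g 0"
proof
  assume "continuous_on conv_seq g"
  then show "(\<lambda>n. g (conv_seq_term n)) \<longlonglongrightarrow> g 0"
    unfolding continuous_on_sequentially using conv_seq_term_tendsto_0
    by (auto simp: o_def conv_seq_eq)
next
  assume lim: "(\<lambda>n. g (conv_seq_term n)) \<longlonglongrightarrow> g 0"
  show "continuous_on conv_seq g"
  proof (rule Elementary_Metric_Spaces.continuous_on_iff[THEN iffD2], intro ballI allI impI)
    fix x e :: real assume x: "x \<in> conv_seq" and e: "0 < e"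
    show "\<exists>d>0. \<forall>x'\<in>conv_seq. dist x' x < d \<longrightarrow> dist (g x') (g x) < e"
    proof (cases "x = 0")
      case True
      obtain M where M: "\<And>n. M \<le> n \<Longrightarrow> dist (g (conv_seq_term n)) (g 0) < e"
        using lim e unfolding LIMSEQ_def by blast
      have "dist (g x') (g x) < e" if x': "x' \<in> conv_seq" "dist x' x < conv_seq_term M" for x'
      proof (cases "x' = 0")
        case False
        then obtain n where n: "x' = conv_seq_term n"
          using x'(1) by (auto simp: conv_seq_eq)
        then have "M \<le> n"
          using x'(2) True conv_seq_term_pos[of n] conv_seq_term_less_iff[of n M]
          by (simp add: dist_real_def)
        then show ?thesis using M n True by simp
      qed (use True e in simp)
      then show ?thesis using conv_seq_term_pos by blast
    next
      case False
      then obtain k where k: "x = conv_seq_term k"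
        using x by (auto simp: conv_seq_eq)
      have "x' = x" if "x' \<in> conv_seq" "dist x' x < conv_seq_term k - conv_seq_term (Suc k)" for x'
        using that k by (simp add: conv_seq_term_isolated)
      moreover have "0 < conv_seq_term k - conv_seq_term (Suc k)"
        using conv_seq_term_less_iff[of "Suc k" k] by simp
      ultimately show ?thesis using e by (metis dist_self)
    qed
  qed
qed

lemma topspace_Cp: "topspace (Cp A) = {f \<in> extensional A. continuous_on A f}"
  by (auto simp: Cp_def topspace_subtopology PiE_def)

lemma continuous_map_Cp_eval: "x \<in> A \<Longrightarrow> continuous_map (Cp A) euclideanreal (\<lambda>f. f x)"
  unfolding Cp_def
  by (intro continuous_map_from_subtopology continuous_map_product_projection)

lemma metrizable_space_Cp:
  assumes "countable A" shows "metrizable_space (Cp A)"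
proof -
  have "metrizable_space (powertop_real A)"
    using assms metrizable_space_euclidean by (auto simp: metrizable_space_product_topology)
  then show ?thesis unfolding Cp_def by (rule metrizable_space_subtopology)
qed

lemma continuous_map_into_Cp:
  assumes "\<And>p. p \<in> A \<Longrightarrow> continuous_map X euclideanreal (\<lambda>x. F x p)"
    and "\<And>x. x \<in> topspace X \<Longrightarrow> F x \<in> topspace (Cp A)"
  shows "continuous_map X (Cp A) F"
  unfolding Cp_def
proof (rule continuous_map_into_subtopology)
  show "continuous_map X (powertop_real A) F"
    using assms by (auto simp: continuous_map_componentwise topspace_Cp)
qed (use assms(2) in \<open>auto simp: topspace_Cp\<close>)

lemma Cp_conv_seq_tendsto:
  "\<phi> \<in> topspace (Cp conv_seq) \<Longrightarrow> (\<lambda>n. \<phi> (conv_seq_term n)) \<longlonglongrightarrow> \<phi> 0"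
  by (simp add: topspace_Cp continuous_on_conv_seq_iff)

definition conv_seq_fun :: "real \<Rightarrow> (nat \<Rightarrow> real) \<Rightarrow> real \<Rightarrow> real" where
  "conv_seq_fun L v p =
     (if p \<in> conv_seq then if p = 0 then L else v (nat \<lfloor>1/p\<rfloor> - 1) else undefined)"

lemma conv_seq_fun_0 [simp]: "conv_seq_fun L v 0 = L"
  by (simp add: conv_seq_fun_def conv_seq_eq)

lemma conv_seq_fun_term [simp]: "conv_seq_fun L v (conv_seq_term n) = v n"
  using conv_seq_term_pos[of n] by (simp add: conv_seq_fun_def conv_seq_eq)

lemma conv_seq_fun_in_Cp_iff: "conv_seq_fun L v \<in> topspace (Cp conv_seq) \<longleftrightarrow> v \<longlonglongrightarrow> L"
proof -
  have "conv_seq_fun L v \<in> extensional conv_seq"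
    by (simp add: extensional_def conv_seq_fun_def)
  then show ?thesis by (simp add: topspace_Cp continuous_on_conv_seq_iff)
qed

lemma Cp_conv_seq_eq_conv_seq_fun:
  assumes "\<phi> \<in> topspace (Cp conv_seq)"
  shows "conv_seq_fun (\<phi> 0) (\<lambda>n. \<phi> (conv_seq_term n)) = \<phi>"
proof
  fix p
  have "\<phi> \<in> extensional conv_seq" using assms by (simp add: topspace_Cp)
  then show "conv_seq_fun (\<phi> 0) (\<lambda>n. \<phi> (conv_seq_term n)) p = \<phi> p"
    by (cases "p \<in> conv_seq") (auto simp: conv_seq_eq extensional_def conv_seq_fun_def)
qed

lemma continuous_map_conv_seq_fun:
  assumes "continuous_map X euclideanreal L" "\<And>n. continuous_map X euclideanreal (\<lambda>x. v x n)"
    and "\<And>x. x \<in> topspace X \<Longrightarrow> v x \<longlonglongrightarrow> L x"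
  shows "continuous_map X (Cp conv_seq) (\<lambda>x. conv_seq_fun (L x) (v x))"
proof (rule continuous_map_into_Cp)
  fix p assume "p \<in> conv_seq"
  then consider "p = 0" | n where "p = conv_seq_term n"
    by (auto simp: conv_seq_eq)
  then show "continuous_map X euclideanreal (\<lambda>x. conv_seq_fun (L x) (v x) p)"
    by cases (simp_all add: assms(1,2))
qed (simp add: conv_seq_fun_in_Cp_iff assms(3))

section \<open>A closed copy of the Baire space in \<open>C\<^sub>p(S)\<close>\<close>

text \<open>The sequence \<open>a\<close> is recorded in the \<open>i\<close>-th column \<open>grid_point i ` UNIV\<close> of \<open>S\<close> as the
  number of leading values \<open>conv_seq_term i\<close>; these levels tend to \<open>0\<close>, which makes the
  resulting function continuous at \<open>0\<close>.\<close>

definition grid_point :: "nat \<Rightarrow> nat \<Rightarrow> real" where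
  "grid_point i j = conv_seq_term (prod_encode (i, j))"

definition baire_embedding :: "(nat \<Rightarrow> nat) \<Rightarrow> real \<Rightarrow> real" where
  "baire_embedding a = conv_seq_fun 0
     (\<lambda>n. case prod_decode n of (i, j) \<Rightarrow> if j < a i then conv_seq_term i else 0)"

lemma grid_point_in_conv_seq: "grid_point i j \<in> conv_seq"
  by (simp add: grid_point_def conv_seq_eq)

lemma baire_embedding_grid_point:
  "baire_embedding a (grid_point i j) = (if j < a i then conv_seq_term i else 0)"
  by (simp add: baire_embedding_def grid_point_def)

lemma baire_embedding_in_Cp: "baire_embedding a \<in> topspace (Cp conv_seq)"
  unfolding baire_embedding_def conv_seq_fun_in_Cp_iff
proof (rule tendstoI)
  fix r :: real assume "0 < r"
  define v where "v n = (case prod_decode n of (i, j) \<Rightarrow> if j < a i then conv_seq_term i else 0)" for n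
  define I where "I = nat \<lceil>1/r\<rceil>"
  have "{n. \<not> dist (v n) 0 < r} \<subseteq> prod_encode ` (SIGMA i:{..I}. {..<a i})"
  proof
    fix n assume n: "n \<in> {n. \<not> dist (v n) 0 < r}"
    obtain i j where ij: "prod_decode n = (i, j)" by fastforce
    then have "n = prod_encode (i, j)" by (metis prod_decode_inverse)
    moreover have "j < a i" "r \<le> conv_seq_term i"
      using n \<open>0 < r\<close> ij conv_seq_term_pos[of i] by (auto simp: v_def split: if_splits)
    moreover have "real i \<le> 1/r"
      using \<open>r \<le> conv_seq_term i\<close> \<open>0 < r\<close> by (simp add: conv_seq_term_def field_simps)
    then have "i \<le> I"
      unfolding I_def by (meson order_trans of_nat_le_iff real_nat_ceiling_ge)
    ultimately show "n \<in> prod_encode ` (SIGMA i:{..I}. {..<a i})" by auto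
  qed
  then have "finite {n. \<not> dist (v n) 0 < r}"
    by (rule finite_subset) auto
  then show "\<forall>\<^sub>F n in sequentially. dist (v n) 0 < r"
    by (simp add: eventually_cofinite[symmetric] cofinite_eq_sequentially)
qed

definition baire_copy :: "(real \<Rightarrow> real) set" where
  "baire_copy = {\<phi> \<in> topspace (Cp conv_seq). \<phi> 0 = 0 \<and> (\<forall>i j. \<phi> (grid_point i j) \<in> {0, conv_seq_term i})}"

lemma baire_embedding_in_baire_copy: "baire_embedding a \<in> baire_copy"
  by (simp add: baire_copy_def baire_embedding_in_Cp baire_embedding_grid_point)
    (simp add: baire_embedding_def)

lemma closedin_baire_copy: "closedin (Cp conv_seq) baire_copy"
proof -
  let ?T = "topspace (Cp conv_seq)"
  have "closedin (Cp conv_seq) {\<phi> \<in> ?T. \<phi> 0 \<in> {0}}"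
    by (rule closedin_continuous_map_preimage[OF continuous_map_Cp_eval]) (auto simp: conv_seq_eq)
  moreover have "closedin (Cp conv_seq) {\<phi> \<in> ?T. \<phi> (grid_point i j) \<in> {0, conv_seq_term i}}" for i j
    by (rule closedin_continuous_map_preimage[OF continuous_map_Cp_eval[OF grid_point_in_conv_seq]]) auto
  ultimately have "closedin (Cp conv_seq) ({\<phi> \<in> ?T. \<phi> 0 \<in> {0}}
      \<inter> (\<Inter>i. \<Inter>j. {\<phi> \<in> ?T. \<phi> (grid_point i j) \<in> {0, conv_seq_term i}}))"
    by blast
  also have "{\<phi> \<in> ?T. \<phi> 0 \<in> {0}}
      \<inter> (\<Inter>i. \<Inter>j. {\<phi> \<in> ?T. \<phi> (grid_point i j) \<in> {0, conv_seq_term i}}) = baire_copy"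
    by (auto simp: baire_copy_def)
  finally show ?thesis .
qed

definition column_height :: "nat \<Rightarrow> (real \<Rightarrow> real) \<Rightarrow> real" where
  "column_height i \<phi> = real (LEAST j. \<phi> (grid_point i j) = 0)"

lemma column_height_baire_embedding: "column_height i (baire_embedding a) = real (a i)"
proof -
  have "(LEAST j. baire_embedding a (grid_point i j) = 0) = a i"
    by (rule Least_equality)
      (use conv_seq_term_pos[of i] in \<open>auto simp: baire_embedding_grid_point split: if_splits\<close>)
  then show ?thesis by (simp add: column_height_def)
qed

lemma baire_copy_column_has_zero:
  assumes "\<phi> \<in> baire_copy" shows "\<exists>j. \<phi> (grid_point i j) = 0"
proof -
  have "strict_mono (\<lambda>j. prod_encode (i, j))"
    by (rule strict_monoI_Suc) (simp add: prod_encode_def)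
  moreover have "(\<lambda>n. \<phi> (conv_seq_term n)) \<longlonglongrightarrow> 0"
    using assms Cp_conv_seq_tendsto[of \<phi>] by (simp add: baire_copy_def)
  ultimately have "(\<lambda>j. \<phi> (grid_point i j)) \<longlonglongrightarrow> 0"
    unfolding grid_point_def by (rule LIMSEQ_subseq_LIMSEQ[unfolded o_def, rotated])
  then obtain j where "\<bar>\<phi> (grid_point i j)\<bar> < conv_seq_term i"
    using conv_seq_term_pos[of i] unfolding LIMSEQ_iff by fastforce
  moreover have "\<phi> (grid_point i j) \<in> {0, conv_seq_term i}"
    using assms by (simp add: baire_copy_def)
  ultimately show ?thesis by auto
qed

lemma column_height_eq_if_close:
  assumes \<phi>: "\<phi> \<in> baire_copy" and \<phi>0: "\<phi>0 \<in> baire_copy"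
    and close: "\<And>j. j \<le> (LEAST j. \<phi>0 (grid_point i j) = 0) \<Longrightarrow>
      \<bar>\<phi> (grid_point i j) - \<phi>0 (grid_point i j)\<bar> < conv_seq_term i / 2"
  shows "column_height i \<phi> = column_height i \<phi>0"
proof -
  define k where "k = (LEAST j. \<phi>0 (grid_point i j) = 0)"
  have column_values: "\<psi> (grid_point i j) \<in> {0, conv_seq_term i}" if "\<psi> \<in> baire_copy" for \<psi> j
    using that by (simp add: baire_copy_def)
  have zero: "\<phi>0 (grid_point i k) = 0"
    unfolding k_def by (rule LeastI_ex[OF baire_copy_column_has_zero[OF \<phi>0]])
  have nonzero: "\<phi>0 (grid_point i j) = conv_seq_term i" if "j < k" for j
    using not_less_Least[OF that[unfolded k_def]] column_values[OF \<phi>0, of j] by auto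
  have "(LEAST j. \<phi> (grid_point i j) = 0) = k"
  proof (rule Least_equality)
    have "\<bar>\<phi> (grid_point i k)\<bar> < conv_seq_term i / 2"
      using close[of k] zero by (simp add: k_def)
    then show "\<phi> (grid_point i k) = 0"
      using column_values[OF \<phi>, of k] conv_seq_term_pos[of i] by auto
  next
    fix j assume j: "\<phi> (grid_point i j) = 0"
    show "k \<le> j"
    proof (rule ccontr)
      assume "\<not> k \<le> j"
      then have "\<bar>\<phi> (grid_point i j) - conv_seq_term i\<bar> < conv_seq_term i / 2"
        using close[of j] nonzero[of j] by (simp add: k_def)
      then show False using j conv_seq_term_pos[of i] by simp
    qed
  qed
  then show ?thesis by (simp add: column_height_def k_def)
qed

lemma continuous_map_column_height:
  "continuous_map (subtopology (Cp conv_seq) baire_copy) euclideanreal (column_height i)"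
  unfolding continuous_map_eq_topcontinuous_at
proof
  let ?X = "subtopology (Cp conv_seq) baire_copy"
  fix \<phi>0 assume "\<phi>0 \<in> topspace ?X"
  define U where "U = {\<phi> \<in> topspace ?X. \<forall>j<Suc (LEAST j. \<phi>0 (grid_point i j) = 0).
      \<bar>\<phi> (grid_point i j) - \<phi>0 (grid_point i j)\<bar> < conv_seq_term i / 2}"
  have U: "openin ?X U"
    unfolding U_def
    by (intro openin_Collect_all_less openin_continuous_map_less continuous_intros
        continuous_map_from_subtopology continuous_map_Cp_eval grid_point_in_conv_seq)
  have "\<phi>0 \<in> U"
    using \<open>\<phi>0 \<in> topspace ?X\<close> conv_seq_term_pos[of i] by (simp add: U_def)
  have "column_height i \<phi> = column_height i \<phi>0" if "\<phi> \<in> U" for \<phi>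
    using that \<open>\<phi>0 \<in> topspace ?X\<close>
    by (intro column_height_eq_if_close) (auto simp: U_def baire_copy_def)
  then show "topcontinuous_at ?X euclideanreal (column_height i) \<phi>0"
    using topcontinuous_at_locally_eq[OF _ _ U \<open>\<phi>0 \<in> U\<close>, of "column_height i" euclideanreal
        "\<lambda>_. column_height i \<phi>0"]
    by simp
qed

lemma Cp_conv_seq_map_onto_lattice:
  obtains \<pi> where "continuous_map (Cp conv_seq) (powertop_real UNIV) \<pi>"
    "\<And>a. \<pi> (baire_embedding a) = (\<lambda>i. real (a i))"
proof -
  have "countable conv_seq" by (simp add: conv_seq_eq)
  then have normal: "normal_space (Cp conv_seq)"
    by (intro metrizable_imp_normal_space metrizable_space_Cp)
  have "\<exists>g. continuous_map (Cp conv_seq) euclideanreal g \<and> (\<forall>\<phi>\<in>baire_copy. g \<phi> = column_height i \<phi>)"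
    for i
  proof -
    obtain g where "continuous_map (Cp conv_seq) euclideanreal g"
      "\<And>\<phi>. \<phi> \<in> baire_copy \<Longrightarrow> g \<phi> = column_height i \<phi>"
      using Tietze_extension_realinterval[OF normal closedin_baire_copy, of UNIV "column_height i"]
        continuous_map_column_height by auto
    then show ?thesis by blast
  qed
  then obtain g where g: "\<And>i. continuous_map (Cp conv_seq) euclideanreal (g i)"
    "\<And>i \<phi>. \<phi> \<in> baire_copy \<Longrightarrow> g i \<phi> = column_height i \<phi>"
    by metis
  show ?thesis
  proof
    show "continuous_map (Cp conv_seq) (powertop_real UNIV) (\<lambda>\<phi> i. g i \<phi>)"
      using g(1) by (simp add: continuous_map_componentwise_UNIV)
    show "(\<lambda>i. g i (baire_embedding a)) = (\<lambda>i. real (a i))" for a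
      using g(2)[OF baire_embedding_in_baire_copy] by (simp add: column_height_baire_embedding)
  qed
qed

lemma continuous_image_of_Cp_conv_seq_if_analytic:
  assumes "locally_convex_space E" "analytic_space E"
  shows "continuous_image_of E (Cp conv_seq)"
proof -
  obtain f where f: "continuous_map baire_space E f" "range f = topspace E"
    using assms(2) by (auto simp: analytic_space_def continuous_image_of_def)
  obtain \<pi> where \<pi>: "continuous_map (Cp conv_seq) (powertop_real UNIV) \<pi>"
    "\<And>a. \<pi> (baire_embedding a) = (\<lambda>i. real (a i))"
    using Cp_conv_seq_map_onto_lattice by blast
  let ?h = "lattice_extension f \<circ> \<pi>"
  have "continuous_map (Cp conv_seq) E ?h"
    using \<pi>(1) continuous_map_lattice_extension[OF assms(1) f(1)] by (rule continuous_map_compose)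
  moreover have "?h ` topspace (Cp conv_seq) = topspace E"
  proof
    show "?h ` topspace (Cp conv_seq) \<subseteq> topspace E"
      using assms(1) by (simp add: locally_convex_space_def tvs_def)
    show "topspace E \<subseteq> ?h ` topspace (Cp conv_seq)"
    proof
      fix y assume "y \<in> topspace E"
      then obtain a where "y = f a" using f(2) by auto
      then have "y = ?h (baire_embedding a)"
        by (simp add: \<pi>(2) lattice_extension_of_nat)
      then show "y \<in> ?h ` topspace (Cp conv_seq)"
        using baire_embedding_in_Cp by blast
    qed
  qed
  ultimately show ?thesis
    unfolding continuous_image_of_def by blast
qed

section \<open>\<open>C\<^sub>p(S)\<close> is a continuous image of the Baire space\<close>

lemma continuous_map_baire_space_coordinate:
  "continuous_map baire_space (discrete_topology UNIV) (\<lambda>x. x k)"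
  unfolding baire_space_def by (rule continuous_map_product_projection) simp

lemma continuous_map_baire_space_coordinate_fun:
  "continuous_map baire_space euclideanreal (\<lambda>x. h (x k))"
  using continuous_map_compose[OF continuous_map_baire_space_coordinate[of k],
      of euclideanreal h]
  by (simp add: o_def)

lemma openin_baire_space_coordinate_eq: "openin baire_space {x. x k = c}"
  using openin_continuous_map_preimage[OF continuous_map_baire_space_coordinate, of "{c}" k] by simp

definition binary_real :: "(nat \<Rightarrow> nat) \<Rightarrow> real" where
  "binary_real x = real_of_int (int_decode (x 0)) + (\<Sum>k. real (x (Suc k) mod 2) / 2 ^ Suc k)"

lemma continuous_map_binary_real: "continuous_map baire_space euclideanreal binary_real"
proof -
  have "continuous_map baire_space euclideanreal (\<lambda>x. \<Sum>k. real (x (Suc k) mod 2) / 2 ^ Suc k)"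
  proof (rule continuous_map_suminf_real[where b = "\<lambda>k. (1/2) ^ Suc k"])
    show "\<bar>real (x (Suc k) mod 2) / 2 ^ Suc k\<bar> \<le> (1/2) ^ Suc k" for k x
      by (simp add: power_one_over divide_right_mono)
    show "continuous_map baire_space euclideanreal (\<lambda>x. real (x (Suc k) mod 2) / 2 ^ Suc k)" for k
      by (rule continuous_map_baire_space_coordinate_fun)
  qed simp
  then show ?thesis
    unfolding binary_real_def[abs_def]
    by (intro continuous_map_add continuous_map_baire_space_coordinate_fun)
qed

lemma dyadic_floor_tendsto: "(\<lambda>n. real_of_int \<lfloor>2^n * t\<rfloor> / 2^n) \<longlonglongrightarrow> t"
proof -
  have "(\<lambda>n. t - real_of_int \<lfloor>2^n * t\<rfloor> / 2^n) \<longlonglongrightarrow> 0"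
  proof (rule Lim_null_comparison)
    show "\<forall>\<^sub>F n in sequentially. norm (t - real_of_int \<lfloor>2^n * t\<rfloor> / 2^n) \<le> inverse (2^n)"
    proof (intro always_eventually allI)
      fix n :: nat
      have "t - real_of_int \<lfloor>2^n * t\<rfloor> / 2^n = (2^n * t - real_of_int \<lfloor>2^n * t\<rfloor>) / 2^n"
        by (simp add: field_simps)
      moreover have "0 \<le> 2^n * t - real_of_int \<lfloor>2^n * t\<rfloor>" "2^n * t - real_of_int \<lfloor>2^n * t\<rfloor> \<le> 1"
        by linarith+
      ultimately show "norm (t - real_of_int \<lfloor>2^n * t\<rfloor> / 2^n) \<le> inverse (2^n)"
        by (simp add: divide_right_mono inverse_eq_divide)
    qed
  qed (rule LIMSEQ_inverse_realpow_zero, simp)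
  then show ?thesis
    using tendsto_diff[OF tendsto_const[of t]] by fastforce
qed

lemma floor_double_minus_double_floor: "\<lfloor>2 * y\<rfloor> - 2 * \<lfloor>y\<rfloor> \<in> {0, 1::int}"
  for y :: real
proof -
  have "2 * \<lfloor>y\<rfloor> \<le> \<lfloor>2 * y\<rfloor>" "\<lfloor>2 * y\<rfloor> < 2 * \<lfloor>y\<rfloor> + 2"
    by (simp_all add: le_floor_iff floor_less_iff) linarith+
  then show ?thesis by auto
qed

lemma surj_binary_real: "surj binary_real"
proof (rule surjI)
  fix t :: real
  define F where "F n = real_of_int \<lfloor>2^n * t\<rfloor> / 2^n" for n :: nat
  define d where "d k = \<lfloor>2^(Suc k) * t\<rfloor> - 2 * \<lfloor>2^k * t\<rfloor>" for k
  have binary_digit: "d k \<in> {0, 1}" for k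
    using floor_double_minus_double_floor[of "2^k * t"] by (simp add: d_def mult.assoc)
  have digit: "real (nat (d k) mod 2) = real_of_int (d k)" for k
    using binary_digit[of k] by auto
  have "real_of_int (d k) / 2 ^ Suc k = F (Suc k) - F k" for k
    by (simp add: d_def F_def field_simps)
  then have "(\<lambda>n. \<Sum>k<n. real_of_int (d k) / 2 ^ Suc k) = (\<lambda>n. F n - F 0)"
    by (simp only: sum_lessThan_telescope)
  moreover have "(\<lambda>n. F n - F 0) \<longlonglongrightarrow> t - F 0"
    unfolding F_def by (intro tendsto_diff dyadic_floor_tendsto tendsto_const)
  ultimately have "(\<lambda>k. real_of_int (d k) / 2 ^ Suc k) sums (t - real_of_int \<lfloor>t\<rfloor>)"
    by (simp add: sums_def F_def)
  then show "binary_real (\<lambda>n. if n = 0 then int_encode \<lfloor>t\<rfloor> else nat (d (n - 1))) = t"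
    by (simp add: binary_real_def digit sums_iff)
qed

definition block :: "nat \<Rightarrow> (nat \<Rightarrow> nat) \<Rightarrow> nat \<Rightarrow> nat" where
  "block k x = (\<lambda>i. x (prod_encode (k, i)))"

lemma continuous_map_block: "continuous_map baire_space baire_space (block k)"
  unfolding baire_space_def block_def continuous_map_componentwise_UNIV
  by (intro allI continuous_map_product_projection) simp

lemma block_interleave [simp]: "block k (\<lambda>m. case prod_decode m of (k, i) \<Rightarrow> y k i) = y k"
  by (simp add: block_def)

definition stage :: "(nat \<Rightarrow> nat) \<Rightarrow> nat \<Rightarrow> nat" where
  "stage y n = (LEAST j. n < (\<Sum>i\<le>j. Suc (y i)))"

lemma less_sum_Suc: "n < (\<Sum>i\<le>n. Suc (y i))"
proof -
  have "(\<Sum>i\<le>n. 1) \<le> (\<Sum>i\<le>n. Suc (y i))" by (rule sum_mono) simp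
  then show ?thesis by simp
qed

lemma less_sum_stage: "n < (\<Sum>i\<le>stage y n. Suc (y i))"
  unfolding stage_def by (rule LeastI[of _ n]) (rule less_sum_Suc)

lemma stage_le: "stage y n \<le> n"
  unfolding stage_def by (rule Least_le) (rule less_sum_Suc)

lemma less_stage:
  assumes "(\<Sum>i\<le>K. Suc (y i)) \<le> n" shows "K < stage y n"
proof (rule ccontr)
  assume "\<not> K < stage y n"
  then have "(\<Sum>i\<le>stage y n. Suc (y i)) \<le> (\<Sum>i\<le>K. Suc (y i))"
    by (intro sum_mono2) auto
  then show False using less_sum_stage[of n y] assms by simp
qed

lemma sum_before_stage:
  assumes "0 < stage y n" shows "(\<Sum>i\<le>stage y n - 1. Suc (y i)) \<le> n"
proof -
  have "stage y n - 1 < stage y n" using assms by simp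
  then show ?thesis
    unfolding stage_def using not_less_Least by fastforce
qed

lemma stage_cong:
  assumes "\<And>i. i \<le> n \<Longrightarrow> y i = y' i" shows "stage y n = stage y' n"
proof -
  have sums: "(\<Sum>i\<le>j. Suc (y i)) = (\<Sum>i\<le>j. Suc (y' i))" if "j \<le> n" for j
    using assms that by (intro sum.cong) auto
  show ?thesis
    unfolding stage_def[of y]
  proof (rule Least_equality)
    show "n < (\<Sum>i\<le>stage y' n. Suc (y i))"
      using less_sum_stage[of n y'] sums[OF stage_le] by simp
  next
    fix j assume j: "n < (\<Sum>i\<le>j. Suc (y i))"
    show "stage y' n \<le> j"
    proof (cases "j \<le> n")
      case True
      then show ?thesis using j sums unfolding stage_def by (intro Least_le) simp
    next
      case False
      then show ?thesis using stage_le[of y' n] by simp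
    qed
  qed
qed

definition clip :: "real \<Rightarrow> real \<Rightarrow> real" where
  "clip e t = max (- e) (min e t)"

lemma abs_clip_le: "0 \<le> e \<Longrightarrow> \<bar>clip e t\<bar> \<le> e"
  by (auto simp: clip_def)

lemma clip_eq_self: "\<bar>t\<bar> \<le> e \<Longrightarrow> clip e t = t"
  by (auto simp: clip_def)

text \<open>Block \<open>0\<close> of \<open>x\<close> codes the limit, block \<open>n + 2\<close> the \<open>n\<close>-th deviation from it and block \<open>1\<close>
  a modulus: at stage \<open>J > 0\<close> the deviation is clipped to \<open>[-1/2^J, 1/2^J]\<close>. This forces
  convergence, while the stage of \<open>n\<close> depends on finitely many coordinates of \<open>x\<close> only.\<close>

definition deviation :: "(nat \<Rightarrow> nat) \<Rightarrow> nat \<Rightarrow> real" where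
  "deviation x n =
     (if stage (block 1 x) n = 0 then binary_real (block (n + 2) x)
      else clip (1 / 2 ^ stage (block 1 x) n) (binary_real (block (n + 2) x)))"

definition baire_to_Cp :: "(nat \<Rightarrow> nat) \<Rightarrow> real \<Rightarrow> real" where
  "baire_to_Cp x = conv_seq_fun (binary_real (block 0 x)) (\<lambda>n. binary_real (block 0 x) + deviation x n)"

lemma continuous_map_binary_real_block:
  "continuous_map baire_space euclideanreal (\<lambda>x. binary_real (block k x))"
  using continuous_map_compose[OF continuous_map_block continuous_map_binary_real]
  by (simp add: o_def)

lemma continuous_map_deviation: "continuous_map baire_space euclideanreal (\<lambda>x. deviation x n)"
  unfolding continuous_map_eq_topcontinuous_at
proof
  fix x0 :: "nat \<Rightarrow> nat"
  define J where "J = stage (block 1 x0) n"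
  define U where "U = {x \<in> topspace baire_space. \<forall>i<Suc n. block 1 x i = block 1 x0 i}"
  define g where "g x = (if J = 0 then binary_real (block (n + 2) x)
      else clip (1 / 2 ^ J) (binary_real (block (n + 2) x)))" for x
  have "openin baire_space U"
    unfolding U_def block_def by (intro openin_Collect_all_less) (simp add: openin_baire_space_coordinate_eq)
  moreover have "x0 \<in> U" by (simp add: U_def)
  moreover have "continuous_map baire_space euclideanreal g"
    unfolding g_def clip_def by (auto intro!: continuous_intros continuous_map_binary_real_block)
  moreover have "deviation x n = g x" if "x \<in> U" for x
  proof -
    have "stage (block 1 x) n = J"
      unfolding J_def using that by (intro stage_cong) (auto simp: U_def)
    then show ?thesis by (simp add: deviation_def g_def)
  qed
  ultimately show "topcontinuous_at baire_space euclideanreal (\<lambda>x. deviation x n) x0"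
    by (intro topcontinuous_at_locally_eq[where g = g]) auto
qed

lemma deviation_tendsto_0: "deviation x \<longlonglongrightarrow> 0"
proof (rule LIMSEQ_I)
  fix r :: real assume "0 < r"
  obtain K where K: "(1/2::real) ^ K < r"
    using real_arch_pow_inv[OF \<open>0 < r\<close>, of "1/2"] by auto
  have "norm (deviation x n - 0) < r" if "(\<Sum>i\<le>K. Suc (block 1 x i)) \<le> n" for n
  proof -
    have K_less: "K < stage (block 1 x) n" using that by (rule less_stage)
    then have "\<bar>deviation x n\<bar> \<le> 1 / 2 ^ stage (block 1 x) n"
      by (simp add: deviation_def abs_clip_le)
    also have "\<dots> \<le> 1 / 2 ^ K"
      using K_less by (simp add: field_simps)
    finally show ?thesis using K by (simp add: power_one_over)
  qed
  then show "\<exists>no. \<forall>n\<ge>no. norm (deviation x n - 0) < r" by blast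
qed

lemma continuous_map_baire_to_Cp: "continuous_map baire_space (Cp conv_seq) baire_to_Cp"
  unfolding baire_to_Cp_def
  by (intro continuous_map_conv_seq_fun continuous_map_binary_real_block continuous_map_add
      continuous_map_deviation)
    (use tendsto_add[OF tendsto_const deviation_tendsto_0] in simp)

lemma deviation_eq_if_modulus:
  assumes "block 1 x = N" "binary_real (block (n + 2) x) = d"
    and modulus: "\<And>k. N k \<le> n \<Longrightarrow> \<bar>d\<bar> < 1 / 2 ^ Suc k"
  shows "deviation x n = d"
proof (cases "stage N n = 0")
  case False
  then have "N (stage N n - 1) \<le> n"
    using sum_before_stage[of N n] member_le_sum[of "stage N n - 1" "{..stage N n - 1}" "\<lambda>i. Suc (N i)"]
    by simp
  then have "\<bar>d\<bar> \<le> 1 / 2 ^ stage N n"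
    using modulus[of "stage N n - 1"] False by simp
  then show ?thesis using False assms(1,2) by (simp add: deviation_def clip_eq_self)
qed (use assms(1,2) in \<open>simp add: deviation_def\<close>)

lemma baire_to_Cp_onto: "baire_to_Cp ` UNIV = topspace (Cp conv_seq)"
proof
  show "baire_to_Cp ` UNIV \<subseteq> topspace (Cp conv_seq)"
    using continuous_map_image_subset_topspace[OF continuous_map_baire_to_Cp] by simp
  show "topspace (Cp conv_seq) \<subseteq> baire_to_Cp ` UNIV"
  proof
    fix \<phi> assume \<phi>: "\<phi> \<in> topspace (Cp conv_seq)"
    define d where "d n = \<phi> (conv_seq_term n) - \<phi> 0" for n
    have "d \<longlonglongrightarrow> 0"
      using tendsto_diff[OF Cp_conv_seq_tendsto[OF \<phi>] tendsto_const[of "\<phi> 0"]]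
      by (simp add: d_def[abs_def])
    then have "\<forall>k. \<exists>N. \<forall>n\<ge>N. \<bar>d n\<bar> < 1 / 2 ^ Suc k"
      by (simp add: LIMSEQ_iff)
    then obtain N where N: "\<And>k n. N k \<le> n \<Longrightarrow> \<bar>d n\<bar> < 1 / 2 ^ Suc k"
      by metis
    obtain code where code: "\<And>t. binary_real (code t) = t"
      using surj_binary_real by (metis surj_f_inv_f)
    define y where "y k = (if k = 0 then code (\<phi> 0) else if k = 1 then N else code (d (k - 2)))" for k
    define x where "x m = (case prod_decode m of (k, i) \<Rightarrow> y k i)" for m
    have blocks: "binary_real (block 0 x) = \<phi> 0" "block 1 x = N"
        "binary_real (block (n + 2) x) = d n" for n
      by (simp_all add: x_def[abs_def] y_def code)
    have "deviation x n = d n" for n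
      using blocks(2,3) N by (rule deviation_eq_if_modulus)
    then have "baire_to_Cp x = conv_seq_fun (\<phi> 0) (\<lambda>n. \<phi> (conv_seq_term n))"
      by (simp add: baire_to_Cp_def blocks d_def)
    then show "\<phi> \<in> baire_to_Cp ` UNIV"
      using Cp_conv_seq_eq_conv_seq_fun[OF \<phi>] by (metis rangeI)
  qed
qed

lemma analytic_space_Cp_conv_seq: "analytic_space (Cp conv_seq)"
  unfolding analytic_space_def continuous_image_of_def
  using continuous_map_baire_to_Cp baire_to_Cp_onto by auto

lemma continuous_image_of_trans:
  assumes "continuous_image_of Y X" "continuous_image_of X Z"
  shows "continuous_image_of Y Z"
proof -
  obtain g where g: "continuous_map X Y g" "g ` topspace X = topspace Y"
    using assms(1) by (auto simp: continuous_image_of_def)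
  obtain f where f: "continuous_map Z X f" "f ` topspace Z = topspace X"
    using assms(2) by (auto simp: continuous_image_of_def)
  have "continuous_map Z Y (g \<circ> f)"
    using f(1) g(1) by (rule continuous_map_compose)
  moreover have "(g \<circ> f) ` topspace Z = topspace Y"
    using f(2) g(2) by (metis image_comp)
  ultimately show ?thesis
    unfolding continuous_image_of_def by blast
qed

theorem proposition3p1:
  fixes E :: "'a::real_vector topology"
  assumes "locally_convex_space E"
  shows "analytic_space E \<longleftrightarrow> continuous_image_of E (Cp conv_seq)"
  using continuous_image_of_Cp_conv_seq_if_analytic[OF assms] analytic_space_Cp_conv_seq
    continuous_image_of_trans
  unfolding analytic_space_def by blast

end
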